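(* Let $p\neq 2$ be a prime and $G=Z_{p^{\lambda_1}}\times\cdots\times Z_{p^{\lambda_n}}$ with $\lambda_1\le\cdots\le\lambda_n$. Then for any $i\in\{1,\dots,n\}$, $\mathrm{Char}(G)\cong\mathrm{Char}(G\times Z_{p^{\lambda_i}})$.
   Context: $\mathrm{Char}(G)$ denotes the lattice of characteristic subgroups of $G$. *)

theory Defs
  imports "HOL-Algebra.Algebra"
begin

definition char_subgroups :: "('a, 'b) monoid_scheme \<Rightarrow> 'a set set" where
  "char_subgroups G = {H. subgroup H G \<and> (\<forall>\<phi> \<in> iso G G. \<phi> ` H = H)}"

definition lattice_iso_sets :: "'a set set \<Rightarrow> 'b set set \<Rightarrow> bool" where
  "lattice_iso_sets L M \<longleftrightarrow>
     (\<exists>f. bij_betw f L M \<and> (\<forall>A\<in>L. \<forall>B\<in>L. A \<subseteq> B \<longleftrightarrow> f A \<subseteq> f B))"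

definition cyclic_prod :: "nat \<Rightarrow> nat \<Rightarrow> (nat \<Rightarrow> nat) \<Rightarrow> (nat \<Rightarrow> int) monoid" where
  "cyclic_prod p n l = product_group {0..<n} (\<lambda>k. integer_mod_group (p ^ l k))"

end

theory Submission
  imports Defs
begin

text \<open>Write \<open>A = \<Prod>\<^sub>k \<int>/m\<^sub>k\<close> with every \<open>m\<^sub>k\<close> odd. Since \<open>2\<close> is invertible modulo every \<open>m\<^sub>k\<close>,
  doubling the coordinates in a set \<open>S\<close> is an automorphism, and dividing it by the identity
  shows that a characteristic subgroup \<open>H\<close> contains the coordinate parts of its elements.
  Diagonal entries of an endomorphism act on a coordinate as multiplications, off-diagonal
  entries through the automorphisms \<open>x \<mapsto> x + g x\<close> with \<open>g\<^sup>2 = 0\<close>; hence characteristic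
  subgroups of \<open>A\<close> are fully invariant. In \<open>B = A \<times> \<int>/m\<^sub>i\<close> a characteristic subgroup \<open>K\<close>
  splits as \<open>(K \<inter> A) \<times> (K \<inter> \<int>/m\<^sub>i)\<close>, and the automorphism swapping the new factor with
  the \<open>i\<close>-th one identifies the second part with the \<open>i\<close>-th coordinate of the first.
  So \<open>H \<mapsto> H \<times> {y. e\<^sub>i y \<in> H}\<close> is the lattice isomorphism.\<close>

lemma (in group_hom) subgroup_vimage:
  assumes "subgroup K H"
  shows "subgroup {x \<in> carrier G. h x \<in> K} G"
  by (rule G.subgroupI) (use assms in \<open>auto simp: subgroup.m_closed subgroup.m_inv_closed
      subgroup.one_closed intro!: exI[of _ "\<one>\<^bsub>G\<^esub>"]\<close>)

lemma char_subgroups_closed: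
  "H \<in> char_subgroups G \<Longrightarrow> \<phi> \<in> iso G G \<Longrightarrow> x \<in> H \<Longrightarrow> \<phi> x \<in> H"
  unfolding char_subgroups_def by blast

lemma char_subgroups_subset: "H \<in> char_subgroups G \<Longrightarrow> H \<subseteq> carrier G"
  unfolding char_subgroups_def using subgroup.subset by blast

lemma (in group) char_subgroupsI:
  assumes "subgroup H G" and "\<And>\<phi>. \<phi> \<in> iso G G \<Longrightarrow> \<phi> ` H \<subseteq> H"
  shows "H \<in> char_subgroups G"
proof -
  have "H \<subseteq> \<phi> ` H" if \<phi>: "\<phi> \<in> iso G G" for \<phi>
  proof
    fix z assume "z \<in> H"
    then have "inv_into (carrier G) \<phi> z \<in> H" and "z \<in> carrier G"
      using assms iso_set_sym[OF \<phi>] subgroup.subset by blast+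
    moreover have "bij_betw \<phi> (carrier G) (carrier G)" using \<phi> by (simp add: iso_def)
    ultimately show "z \<in> \<phi> ` H" by (metis bij_betw_inv_into_right imageI)
  qed
  with assms show ?thesis unfolding char_subgroups_def by (blast intro: subset_antisym)
qed

lemma (in comm_group) transvection_iso:
  assumes g: "g \<in> hom G G" and gg: "\<And>x. x \<in> carrier G \<Longrightarrow> g (g x) = \<one>"
  shows "(\<lambda>x. x \<otimes> g x) \<in> iso G G"
proof -
  interpret g: group_hom G G g using g by (simp add: group_hom_def group_hom_axioms_def is_group)
  have gc: "\<And>x. x \<in> carrier G \<Longrightarrow> g x \<in> carrier G" using hom_in_carrier[OF g] .
  show ?thesis
  proof (rule group_isomorphisms_imp_iso, unfold group_isomorphisms_def, intro conjI ballI)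
    show "(\<lambda>x. x \<otimes> g x) \<in> hom G G"
      by (rule homI) (simp_all add: gc m_ac)
    show "(\<lambda>x. x \<otimes> inv g x) \<in> hom G G"
      by (rule homI) (simp_all add: gc m_ac inv_mult)
    fix x assume x: "x \<in> carrier G"
    show "x \<otimes> g x \<otimes> inv g (x \<otimes> g x) = x" and "x \<otimes> inv g x \<otimes> g (x \<otimes> inv g x) = x"
      using x gc gg by (simp_all add: m_assoc g.hom_inv)
  qed
qed

lemma integer_mod_group_hom_zero:
  assumes "h \<in> hom (integer_mod_group a) (integer_mod_group b)"
  shows "h 0 = 0"
proof -
  have "group_hom (integer_mod_group a) (integer_mod_group b) h"
    using assms by (simp add: group_hom_def group_hom_axioms_def)
  then show ?thesis using group_hom.hom_one by fastforce
qed

text \<open>\<open>1 mod a\<close> rather than \<open>1\<close>, so that the trivial group \<open>a = 1\<close> is covered too.\<close>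
lemma integer_mod_group_hom_eq:
  assumes h: "h \<in> hom (integer_mod_group a) (integer_mod_group b)"
    and c: "c \<in> carrier (integer_mod_group a)" and "a > 0"
  shows "h c = (c * h (1 mod int a)) mod int b"
proof -
  have c0: "0 \<le> c" "c < int a" and one: "1 mod int a \<in> carrier (integer_mod_group a)"
    using c \<open>a > 0\<close> by (auto simp: carrier_integer_mod_group)
  then have "h c = h ((1 mod int a) [^]\<^bsub>integer_mod_group a\<^esub> nat c)"
    by (simp add: mod_mult_right_eq)
  also have "\<dots> = h (1 mod int a) [^]\<^bsub>integer_mod_group b\<^esub> nat c"
    by (rule hom_nat_pow[OF h one group_integer_mod_group group_integer_mod_group])
  also have "\<dots> = (c * h (1 mod int a)) mod int b"
    using c0 by simp
  finally show ?thesis .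
qed

section \<open>Products of cyclic groups of odd order\<close>

locale odd_cyclic_product =
  fixes n :: nat and m :: "nat \<Rightarrow> nat"
  assumes odd_moduli: "\<And>k. k < n \<Longrightarrow> odd (m k)"
begin

definition A :: "(nat \<Rightarrow> int) monoid" where
  "A = product_group {0..<n} (\<lambda>k. integer_mod_group (m k))"

lemma moduli_pos: "k < n \<Longrightarrow> 0 < m k"
  using odd_moduli odd_pos by blast

lemma carrier_factor: "k < n \<Longrightarrow> carrier (integer_mod_group (m k)) = {0..<int (m k)}"
  using moduli_pos by (simp add: carrier_integer_mod_group)

lemma carrier_A:
  "x \<in> carrier A \<longleftrightarrow> x \<in> extensional {0..<n} \<and> (\<forall>k<n. 0 \<le> x k \<and> x k < int (m k))"
  using moduli_pos by (auto simp: A_def PiE_iff carrier_integer_mod_group)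

lemma mult_A: "x \<otimes>\<^bsub>A\<^esub> y = (\<lambda>k\<in>{0..<n}. (x k + y k) mod int (m k))"
  by (simp add: A_def)

lemma one_A: "\<one>\<^bsub>A\<^esub> = (\<lambda>k\<in>{0..<n}. 0)"
  by (simp add: A_def)

lemma inv_A: "x \<in> carrier A \<Longrightarrow> inv\<^bsub>A\<^esub> x = (\<lambda>k\<in>{0..<n}. (- x k) mod int (m k))"
  unfolding A_def by (subst inv_product_group) (auto simp: A_def PiE_iff)

lemma group_A: "group A"
  by (simp add: A_def)

lemma comm_group_A: "comm_group A"
  by (rule group.group_comm_groupI[OF group_A]) (auto simp: mult_A add.commute)

definition embed :: "nat \<Rightarrow> int \<Rightarrow> nat \<Rightarrow> int" where
  "embed k c = (\<lambda>j\<in>{0..<n}. if j = k then c else 0)"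

lemma embed_zero: "embed k 0 = \<one>\<^bsub>A\<^esub>"
  by (simp add: embed_def one_A)

lemma embed_hom: "k < n \<Longrightarrow> embed k \<in> hom (integer_mod_group (m k)) A"
proof (rule homI)
  fix c assume "k < n" "c \<in> carrier (integer_mod_group (m k))"
  then show "embed k c \<in> carrier A"
    by (auto simp: carrier_A embed_def carrier_factor moduli_pos)
next
  fix c d show "embed k (c \<otimes>\<^bsub>integer_mod_group (m k)\<^esub> d) = embed k c \<otimes>\<^bsub>A\<^esub> embed k d"
    by (auto simp: embed_def mult_A fun_eq_iff)
qed

lemma embed_carrier: "k < n \<Longrightarrow> c \<in> carrier (integer_mod_group (m k)) \<Longrightarrow> embed k c \<in> carrier A"
  by (rule hom_in_carrier[OF embed_hom])

lemma proj_hom: "k < n \<Longrightarrow> (\<lambda>x. x k) \<in> hom A (integer_mod_group (m k))"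
  by (rule homI) (auto simp: carrier_A mult_A carrier_integer_mod_group moduli_pos)

lemma subgroup_memI_embed:
  assumes M: "subgroup M A" and x: "x \<in> carrier A"
    and embeds: "\<And>k. k < n \<Longrightarrow> embed k (x k) \<in> M"
  shows "x \<in> M"
proof -
  define trunc where "trunc s = (\<lambda>k\<in>{0..<n}. if k < s then x k else 0)" for s
  have "s \<le> n \<Longrightarrow> trunc s \<in> M" for s
  proof (induction s)
    case 0
    have "trunc 0 = \<one>\<^bsub>A\<^esub>" by (simp add: trunc_def one_A)
    then show ?case using M subgroup.one_closed by metis
  next
    case (Suc s)
    have "trunc (Suc s) = trunc s \<otimes>\<^bsub>A\<^esub> embed s (x s)"
      using x Suc.prems by (auto simp: trunc_def mult_A embed_def fun_eq_iff carrier_A)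
    then show ?case using Suc M embeds subgroup.m_closed by fastforce
  qed
  moreover have "trunc n = x" using x by (auto simp: trunc_def carrier_A fun_eq_iff extensional_def)
  ultimately show ?thesis by auto
qed

definition scale :: "nat set \<Rightarrow> (nat \<Rightarrow> int) \<Rightarrow> (nat \<Rightarrow> int) \<Rightarrow> nat \<Rightarrow> int" where
  "scale S c x = (\<lambda>k\<in>{0..<n}. if k \<in> S then (c k * x k) mod int (m k) else x k)"

lemma scale_hom: "scale S c \<in> hom A A"
proof (rule homI)
  fix x assume "x \<in> carrier A"
  then show "scale S c x \<in> carrier A"
    using moduli_pos by (simp add: scale_def carrier_A)
next
  fix x y
  show "scale S c (x \<otimes>\<^bsub>A\<^esub> y) = scale S c x \<otimes>\<^bsub>A\<^esub> scale S c y"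
    by (simp add: scale_def mult_A fun_eq_iff mod_simps distrib_left)
qed

lemma scale_scale: "scale S c (scale S d x) = scale S (\<lambda>k. c k * d k) x"
  by (simp add: scale_def fun_eq_iff mod_mult_right_eq mult.assoc)

lemma scale_unit:
  assumes "\<And>k. k < n \<Longrightarrow> c k mod int (m k) = 1 mod int (m k)" and "x \<in> carrier A"
  shows "scale S c x = x"
proof -
  have "(c k * x k) mod int (m k) = x k" if "k < n" for k
  proof -
    have "(c k * x k) mod int (m k) = (1 mod int (m k) * x k) mod int (m k)"
      using assms(1)[OF that] by (metis mod_mult_left_eq)
    also have "\<dots> = x k"
      using assms(2) that by (simp add: carrier_A mod_mult_left_eq)
    finally show ?thesis .
  qed
  with assms(2) show ?thesis by (auto simp: scale_def carrier_A fun_eq_iff extensional_def)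
qed

text \<open>Oddness of the moduli is used exactly here: \<open>2\<close> is invertible modulo each \<open>m k\<close>.\<close>
lemma scale_two_iso: "scale S (\<lambda>_. 2) \<in> iso A A"
proof (rule group_isomorphisms_imp_iso, unfold group_isomorphisms_def, intro conjI ballI)
  let ?half = "\<lambda>k. (int (m k) + 1) div 2"
  have "2 * ?half k = int (m k) + 1" if "k < n" for k
    using odd_moduli[OF that] by presburger
  then have inverse: "(2 * ?half k) mod int (m k) = 1 mod int (m k)"
    "(?half k * 2) mod int (m k) = 1 mod int (m k)" if "k < n" for k
    using that by (simp_all add: mult.commute)
  show "scale S (\<lambda>_. 2) \<in> hom A A" "scale S ?half \<in> hom A A"
    by (rule scale_hom)+
  fix x assume "x \<in> carrier A"
  then show "scale S ?half (scale S (\<lambda>_. 2) x) = x" "scale S (\<lambda>_. 2) (scale S ?half x) = x"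
    unfolding scale_scale by (simp_all add: inverse scale_unit)
qed

lemma scale_two_div:
  assumes "x \<in> carrier A"
  shows "scale S (\<lambda>_. 2) x \<otimes>\<^bsub>A\<^esub> inv\<^bsub>A\<^esub> x = (\<lambda>k\<in>{0..<n}. if k \<in> S then x k else 0)"
proof (rule ext)
  fix k
  have "x k mod int (m k) = x k" if "k < n"
    using assms that by (simp add: carrier_A)
  then show "(scale S (\<lambda>_. 2) x \<otimes>\<^bsub>A\<^esub> inv\<^bsub>A\<^esub> x) k = (\<lambda>k\<in>{0..<n}. if k \<in> S then x k else 0) k"
    by (simp add: scale_def inv_A[OF assms] mult_A mod_simps)
qed


subsection \<open>Characteristic subgroups are fully invariant\<close>

lemma char_subgroup_embed_coord:
  assumes H: "H \<in> char_subgroups A" and x: "x \<in> H" and k: "k < n"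
  shows "embed k (x k) \<in> H"
proof -
  have sg: "subgroup H A" using H by (simp add: char_subgroups_def)
  then have xc: "x \<in> carrier A" using x subgroup.subset by blast
  have "scale {k} (\<lambda>_. 2) x \<otimes>\<^bsub>A\<^esub> inv\<^bsub>A\<^esub> x \<in> H"
    using char_subgroups_closed[OF H scale_two_iso x] x sg
    by (simp add: subgroup.m_closed subgroup.m_inv_closed)
  moreover have "scale {k} (\<lambda>_. 2) x \<otimes>\<^bsub>A\<^esub> inv\<^bsub>A\<^esub> x = embed k (x k)"
    unfolding scale_two_div[OF xc] by (auto simp: embed_def)
  ultimately show ?thesis by simp
qed

lemma subgroup_embed_endo_closed:
  assumes H: "subgroup H A" and k: "k < n"
    and h: "h \<in> hom (integer_mod_group (m k)) (integer_mod_group (m k))"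
    and c: "c \<in> carrier (integer_mod_group (m k))" and cH: "embed k c \<in> H"
  shows "embed k (h c) \<in> H"
proof -
  define t where "t = nat (h (1 mod int (m k)))"
  have "h (1 mod int (m k)) \<in> carrier (integer_mod_group (m k))"
    using hom_in_carrier[OF h] k by (simp add: carrier_factor moduli_pos)
  then have "h c = c [^]\<^bsub>integer_mod_group (m k)\<^esub> t"
    using integer_mod_group_hom_eq[OF h c moduli_pos[OF k]]
    by (simp add: t_def carrier_factor[OF k] mult.commute)
  then have "embed k (h c) = embed k c [^]\<^bsub>A\<^esub> t"
    using hom_nat_pow[OF embed_hom[OF k] c group_integer_mod_group group_A] by simp
  then show ?thesis
    using group.subgroup_int_pow_closed[OF group_A H cH, of "int t"] by (simp add: int_pow_int)
qed

text \<open>Off-diagonal entries of an endomorphism are realised by the transvection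
  \<open>x \<mapsto> x + g x\<close>, where \<open>g\<close> maps the \<open>k\<close>-th factor to the \<open>j\<close>-th one via \<open>h\<close>.\<close>
lemma char_subgroup_offdiag_closed:
  assumes H: "H \<in> char_subgroups A" and j: "j < n" and k: "k < n" and "j \<noteq> k"
    and h: "h \<in> hom (integer_mod_group (m k)) (integer_mod_group (m j))"
    and cH: "embed k c \<in> H"
  shows "embed j (h c) \<in> H"
proof -
  interpret A: comm_group A by (rule comm_group_A)
  define g where "g = embed j \<circ> h \<circ> (\<lambda>x. x k)"
  have g: "g \<in> hom A A"
    unfolding g_def using hom_compose[OF hom_compose[OF proj_hom[OF k] h] embed_hom[OF j]]
    by (simp add: comp_assoc)
  have "g (g x) = \<one>\<^bsub>A\<^esub>" for x
    using \<open>j \<noteq> k\<close> k integer_mod_group_hom_zero[OF h] by (simp add: g_def embed_def one_A)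
  then have "embed k c \<otimes>\<^bsub>A\<^esub> g (embed k c) \<in> H"
    using char_subgroups_closed[OF H A.transvection_iso[OF g] cH] by simp
  moreover have sg: "subgroup H A" using H by (simp add: char_subgroups_def)
  ultimately have "inv\<^bsub>A\<^esub> (embed k c) \<otimes>\<^bsub>A\<^esub> (embed k c \<otimes>\<^bsub>A\<^esub> g (embed k c)) \<in> H"
    using cH by (simp add: subgroup.m_closed subgroup.m_inv_closed)
  moreover have "embed k c \<in> carrier A" using cH sg subgroup.subset by blast
  then have "inv\<^bsub>A\<^esub> (embed k c) \<otimes>\<^bsub>A\<^esub> (embed k c \<otimes>\<^bsub>A\<^esub> g (embed k c)) = g (embed k c)"
    using hom_in_carrier[OF g] by (simp add: A.m_assoc[symmetric])
  moreover have "g (embed k c) = embed j (h c)" using k by (simp add: g_def embed_def)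
  ultimately show ?thesis by simp
qed

lemma char_subgroups_fully_invariant:
  assumes H: "H \<in> char_subgroups A" and e: "e \<in> hom A A" and x: "x \<in> H"
  shows "e x \<in> H"
proof -
  have sg: "subgroup H A" using H by (simp add: char_subgroups_def)
  have xc: "x \<in> carrier A" using x sg subgroup.subset by blast
  show ?thesis
  proof (rule subgroup_memI_embed[OF sg hom_in_carrier[OF e xc]])
    fix j assume j: "j < n"
    let ?e = "embed j \<circ> (\<lambda>y. y j) \<circ> e"
    have "?e \<in> hom A A"
      using hom_compose[OF hom_compose[OF e proj_hom[OF j]] embed_hom[OF j]] by (simp add: comp_assoc)
    then have "group_hom A A ?e" using group_A by (simp add: group_hom_def group_hom_axioms_def)
    then have "subgroup {y \<in> carrier A. ?e y \<in> H} A" by (rule group_hom.subgroup_vimage[OF _ sg])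
    then have "x \<in> {y \<in> carrier A. ?e y \<in> H}"
    proof (rule subgroup_memI_embed[OF _ xc])
      fix k assume k: "k < n"
      let ?h = "\<lambda>c. e (embed k c) j"
      have "?h \<in> hom (integer_mod_group (m k)) (integer_mod_group (m j))"
        using hom_compose[OF hom_compose[OF embed_hom[OF k] e] proj_hom[OF j]] by (simp add: o_def)
      moreover have "x k \<in> carrier (integer_mod_group (m k))"
        using xc k by (simp add: carrier_A carrier_factor)
      moreover note embed_k = char_subgroup_embed_coord[OF H x k]
      ultimately have "embed j (?h (x k)) \<in> H"
        using subgroup_embed_endo_closed[OF sg k] char_subgroup_offdiag_closed[OF H j k]
        by (cases "j = k") auto
      then show "embed k (x k) \<in> {y \<in> carrier A. ?e y \<in> H}"
        using embed_k sg subgroup.subset by auto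
    qed
    then show "embed j (e x j) \<in> H" by simp
  qed
qed

end

section \<open>Adjoining a copy of a factor\<close>

locale odd_cyclic_product_extension = odd_cyclic_product +
  fixes i :: nat
  assumes i_less: "i < n"
begin

abbreviation Z :: "int monoid" where "Z \<equiv> integer_mod_group (m i)"

abbreviation B :: "((nat \<Rightarrow> int) \<times> int) monoid" where "B \<equiv> A \<times>\<times> Z"

definition extend :: "(nat \<Rightarrow> int) set \<Rightarrow> ((nat \<Rightarrow> int) \<times> int) set" where
  "extend H = H \<times> {y \<in> carrier Z. embed i y \<in> H}"

definition base :: "((nat \<Rightarrow> int) \<times> int) set \<Rightarrow> (nat \<Rightarrow> int) set" where
  "base K = {x \<in> carrier A. (x, 0) \<in> K}"

definition swap :: "(nat \<Rightarrow> int) \<times> int \<Rightarrow> (nat \<Rightarrow> int) \<times> int" where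
  "swap z = ((fst z)(i := snd z), fst z i)"

lemma group_B: "group B"
  by (rule DirProd_group[OF group_A group_integer_mod_group])

lemma one_A_closed: "\<one>\<^bsub>A\<^esub> \<in> carrier A"
  by (rule monoid.one_closed[OF group.is_monoid[OF group_A]])

lemma carrier_Z_mod: "y \<in> carrier Z \<Longrightarrow> y mod int (m i) = y"
  using i_less by (simp add: carrier_factor)

lemma r_one_A: "x \<in> carrier A \<Longrightarrow> x \<otimes>\<^bsub>A\<^esub> \<one>\<^bsub>A\<^esub> = x"
  by (rule monoid.r_one[OF group.is_monoid[OF group_A]])

lemma swap_iso: "swap \<in> iso B B"
proof -
  have hom: "swap \<in> hom B B"
  proof (rule homI)
    fix z assume "z \<in> carrier B"
    then show "swap z \<in> carrier B"
      using i_less by (auto simp: swap_def carrier_A carrier_factor mem_Times_iff extensional_def)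
  next
    fix z w
    show "swap (z \<otimes>\<^bsub>B\<^esub> w) = swap z \<otimes>\<^bsub>B\<^esub> swap w"
      using i_less by (auto simp: swap_def mult_DirProd' mult_A fun_eq_iff)
  qed
  have "swap (swap z) = z" if "z \<in> carrier B" for z
    using that by (cases z) (auto simp: swap_def carrier_A fun_eq_iff)
  with hom show ?thesis
    by (intro group_isomorphisms_imp_iso[where g = swap]) (simp add: group_isomorphisms_def)
qed

lemma swap_embed: "swap (embed i y, 0) = (\<one>\<^bsub>A\<^esub>, y)" "swap (\<one>\<^bsub>A\<^esub>, y) = (embed i y, 0)"
  using i_less by (auto simp: swap_def embed_def one_A fun_eq_iff)

lemma iso_on_A: "\<phi> \<in> iso A A \<Longrightarrow> (\<lambda>(x, y). (\<phi> x, y)) \<in> iso B B"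
  using group.DirProd_iso_set_trans[OF group_A _ iso_set_refl] by blast

lemma base_extend: "subgroup H A \<Longrightarrow> base (extend H) = H"
  using subgroup.subset[of H A] subgroup.one_closed[of H A]
  by (auto simp: base_def extend_def embed_zero)

lemma extend_mono: "H \<subseteq> H' \<Longrightarrow> extend H \<subseteq> extend H'"
  by (auto simp: extend_def)

lemma base_mono: "K \<subseteq> K' \<Longrightarrow> base K \<subseteq> base K'"
  by (auto simp: base_def)


lemma extend_subgroup:
  assumes "subgroup H A"
  shows "subgroup (extend H) B"
proof -
  have "group_hom Z A (embed i)"
    using embed_hom[OF i_less] group_A by (simp add: group_hom_def group_hom_axioms_def)
  then have "subgroup {y \<in> carrier Z. embed i y \<in> H} Z"
    by (rule group_hom.subgroup_vimage[OF _ assms])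
  then show ?thesis
    unfolding extend_def by (rule DirProd_subgroups[OF group_A assms group_integer_mod_group])
qed

lemma extend_hom_closed:
  assumes H: "H \<in> char_subgroups A" and e: "e \<in> hom A B" and x: "x \<in> H"
  shows "e x \<in> extend H"
proof -
  have "fst \<in> hom B A" and "snd \<in> hom B Z"
    by (auto intro!: homI simp: mult_DirProd')
  then have "fst \<circ> e \<in> hom A A" and "embed i \<circ> snd \<circ> e \<in> hom A A"
    using hom_compose[OF e] hom_compose[OF hom_compose[OF e] embed_hom[OF i_less]]
    by (auto simp: comp_assoc)
  moreover have "e x \<in> carrier B"
    using hom_in_carrier[OF e] char_subgroups_subset[OF H] x by blast
  ultimately show ?thesis
    using char_subgroups_fully_invariant[OF H _ x] by (cases "e x") (fastforce simp: extend_def)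
qed

lemma extend_char:
  assumes H: "H \<in> char_subgroups A"
  shows "extend H \<in> char_subgroups B"
proof -
  have sg: "subgroup (extend H) B"
    using H extend_subgroup by (simp add: char_subgroups_def)
  let ?\<iota> = "\<lambda>x. (x, 0)" and ?\<kappa> = "\<lambda>x. (\<one>\<^bsub>A\<^esub>, x i)"
  have \<iota>: "?\<iota> \<in> hom A B"
    by (rule homI) simp_all
  have \<kappa>: "?\<kappa> \<in> hom A B"
    using hom_in_carrier[OF proj_hom[OF i_less]] hom_mult[OF proj_hom[OF i_less]] one_A_closed
    by (intro homI) (simp_all add: monoid.l_one[OF group.is_monoid[OF group_A]])
  have "\<Phi> ` extend H \<subseteq> extend H" if "\<Phi> \<in> iso B B" for \<Phi>
  proof
    have \<Phi>: "\<Phi> \<in> hom B B" using that by (simp add: iso_def)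
    fix z assume "z \<in> \<Phi> ` extend H"
    then obtain x y where z: "z = \<Phi> (x, y)" and x: "x \<in> H" and y: "y \<in> carrier Z"
      and yH: "embed i y \<in> H"
      by (auto simp: extend_def)
    have xc: "x \<in> carrier A" using char_subgroups_subset[OF H] x by blast
    then have "(x, y) = ?\<iota> x \<otimes>\<^bsub>B\<^esub> ?\<kappa> (embed i y)"
      using y i_less by (simp add: embed_def r_one_A carrier_Z_mod)
    then have "z = \<Phi> (?\<iota> x \<otimes>\<^bsub>B\<^esub> ?\<kappa> (embed i y))"
      using z by metis
    also have "\<dots> = (\<Phi> \<circ> ?\<iota>) x \<otimes>\<^bsub>B\<^esub> (\<Phi> \<circ> ?\<kappa>) (embed i y)"
      using hom_mult[OF \<Phi> hom_in_carrier[OF \<iota> xc] hom_in_carrier[OF \<kappa> embed_carrier[OF i_less y]]]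
      by simp
    finally have "z = (\<Phi> \<circ> ?\<iota>) x \<otimes>\<^bsub>B\<^esub> (\<Phi> \<circ> ?\<kappa>) (embed i y)" .
    moreover have "(\<Phi> \<circ> ?\<iota>) x \<in> extend H" "(\<Phi> \<circ> ?\<kappa>) (embed i y) \<in> extend H"
      using extend_hom_closed[OF H hom_compose[OF \<iota> \<Phi>] x]
        extend_hom_closed[OF H hom_compose[OF \<kappa> \<Phi>] yH] by simp_all
    ultimately show "z \<in> extend H" using subgroup.m_closed[OF sg] by simp
  qed
  then show ?thesis by (rule group.char_subgroupsI[OF group_B sg])
qed

lemma base_char:
  assumes K: "K \<in> char_subgroups B"
  shows "base K \<in> char_subgroups A"
proof (rule group.char_subgroupsI[OF group_A])
  have "(\<lambda>x. (x, 0)) \<in> hom A B"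
    by (rule homI) simp_all
  then have "group_hom A B (\<lambda>x. (x, 0))"
    using group_A group_B by (simp add: group_hom_def group_hom_axioms_def)
  then show "subgroup (base K) A"
    unfolding base_def using K by (simp add: char_subgroups_def group_hom.subgroup_vimage)
  fix \<phi> assume \<phi>: "\<phi> \<in> iso A A"
  show "\<phi> ` base K \<subseteq> base K"
  proof
    fix z assume "z \<in> \<phi> ` base K"
    then obtain x where z: "z = \<phi> x" and x: "x \<in> carrier A" "(x, 0) \<in> K"
      by (auto simp: base_def)
    have "(\<phi> x, 0) \<in> K"
      using char_subgroups_closed[OF K iso_on_A[OF \<phi>] x(2)] by simp
    moreover have "\<phi> x \<in> carrier A"
      by (rule hom_in_carrier[OF iso_imp_homomorphism[OF \<phi>] x(1)])
    ultimately show "z \<in> base K"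
      using z by (simp add: base_def)
  qed
qed

text \<open>Doubling the \<open>A\<close>-component is an automorphism of \<open>B\<close>; dividing it by the identity
  isolates the \<open>A\<close>-component.\<close>
lemma char_subgroup_B_split:
  assumes K: "K \<in> char_subgroups B" and xy: "(x, y) \<in> K"
  shows "(x, 0) \<in> K" and "(\<one>\<^bsub>A\<^esub>, y) \<in> K"
proof -
  have sg: "subgroup K B" using K by (simp add: char_subgroups_def)
  have "(x, y) \<in> carrier B" using char_subgroups_subset[OF K] xy by blast
  then have x: "x \<in> carrier A" and y: "y \<in> carrier Z" by simp_all
  have "(\<lambda>(x, y). (scale UNIV (\<lambda>_. 2) x, y)) (x, y) \<otimes>\<^bsub>B\<^esub> inv\<^bsub>B\<^esub> (x, y) \<in> K"
    using char_subgroups_closed[OF K iso_on_A[OF scale_two_iso] xy] xy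
    by (simp add: subgroup.m_closed[OF sg] subgroup.m_inv_closed[OF sg])
  moreover have "scale UNIV (\<lambda>_. 2) x \<otimes>\<^bsub>A\<^esub> inv\<^bsub>A\<^esub> x = x"
    using scale_two_div[OF x, of UNIV] x by (simp add: carrier_A fun_eq_iff extensional_def)
  ultimately show x0: "(x, 0) \<in> K"
    using x y by (simp add: group_A mod_add_right_eq)
  have "inv\<^bsub>B\<^esub> (x, 0) \<otimes>\<^bsub>B\<^esub> (x, y) \<in> K"
    using x0 xy by (simp add: subgroup.m_closed[OF sg] subgroup.m_inv_closed[OF sg])
  moreover have "inv\<^bsub>B\<^esub> (x, 0) \<otimes>\<^bsub>B\<^esub> (x, y) = (\<one>\<^bsub>A\<^esub>, y)"
    using x y by (simp add: group_A group.l_inv carrier_Z_mod)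
  ultimately show "(\<one>\<^bsub>A\<^esub>, y) \<in> K" by simp
qed

lemma extend_base:
  assumes K: "K \<in> char_subgroups B"
  shows "extend (base K) = K"
proof
  have sg: "subgroup K B" using K by (simp add: char_subgroups_def)
  show "extend (base K) \<subseteq> K"
  proof
    fix z assume "z \<in> extend (base K)"
    then obtain x y where z: "z = (x, y)" and x: "x \<in> carrier A" "(x, 0) \<in> K"
      and y: "y \<in> carrier Z" and yK: "(embed i y, 0) \<in> K"
      by (auto simp: extend_def base_def)
    have "(\<one>\<^bsub>A\<^esub>, y) \<in> K"
      using char_subgroups_closed[OF K swap_iso yK] by (simp add: swap_embed)
    with x(2) have "(x, 0) \<otimes>\<^bsub>B\<^esub> (\<one>\<^bsub>A\<^esub>, y) \<in> K"
      by (rule subgroup.m_closed[OF sg])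
    then show "z \<in> K"
      using z x y by (simp add: r_one_A carrier_Z_mod)
  qed
  show "K \<subseteq> extend (base K)"
  proof
    fix z assume zK: "z \<in> K"
    obtain x y where z: "z = (x, y)" by (cases z)
    have "(x, y) \<in> carrier B" using char_subgroups_subset[OF K] zK z by blast
    then have x: "x \<in> carrier A" and y: "y \<in> carrier Z" by simp_all
    have "(embed i y, 0) \<in> K"
      using char_subgroups_closed[OF K swap_iso char_subgroup_B_split(2)[OF K zK[unfolded z]]]
      by (simp add: swap_embed)
    then show "z \<in> extend (base K)"
      using z x y char_subgroup_B_split(1)[OF K zK[unfolded z]] embed_carrier[OF i_less y]
      by (simp add: extend_def base_def)
  qed
qed

lemma lattice_iso_char_subgroups_extend:
  "lattice_iso_sets (char_subgroups A) (char_subgroups B)"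
  unfolding lattice_iso_sets_def
proof (intro exI conjI ballI)
  show "bij_betw extend (char_subgroups A) (char_subgroups B)"
  proof (rule bij_betwI[where g = base])
    show "extend \<in> char_subgroups A \<rightarrow> char_subgroups B" using extend_char by blast
    show "base \<in> char_subgroups B \<rightarrow> char_subgroups A" using base_char by blast
    show "base (extend H) = H" if "H \<in> char_subgroups A" for H
      using that base_extend by (simp add: char_subgroups_def)
    show "extend (base K) = K" if "K \<in> char_subgroups B" for K
      using that by (rule extend_base)
  qed
  fix H H' assume H: "H \<in> char_subgroups A" and H': "H' \<in> char_subgroups A"
  show "H \<subseteq> H' \<longleftrightarrow> extend H \<subseteq> extend H'"
  proof
    assume "extend H \<subseteq> extend H'"
    then have "base (extend H) \<subseteq> base (extend H')" by (rule base_mono)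
    then show "H \<subseteq> H'" using H H' base_extend by (simp add: char_subgroups_def)
  qed (rule extend_mono)
qed

end

theorem mainTheorem8:
  fixes p n :: nat and l :: "nat \<Rightarrow> nat" and i :: nat
  assumes "Factorial_Ring.prime p" and "p \<noteq> 2"
    and "\<And>k. k < n \<Longrightarrow> 1 \<le> l k"
    and "\<And>j k. j \<le> k \<Longrightarrow> k < n \<Longrightarrow> l j \<le> l k"
    and "i < n"
  shows "lattice_iso_sets (char_subgroups (cyclic_prod p n l))
           (char_subgroups (cyclic_prod p n l \<times>\<times> integer_mod_group (p ^ l i)))"
proof -
  have "odd p"
    using assms(1,2) prime_ge_2_nat[of p] prime_odd_nat[of p] by linarith
  interpret odd_cyclic_product_extension n "\<lambda>k. p ^ l k" i
    using \<open>odd p\<close> \<open>i < n\<close> by unfold_locales simp_all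
  have "cyclic_prod p n l = A" by (simp add: cyclic_prod_def A_def)
  then show ?thesis using lattice_iso_char_subgroups_extend by simp
qed

end
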